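(* Let $m,n$ be positive integers and $x\ge 2$ real. Define $\alpha_j\ge0$ ($1\le j\le n$) and $\beta_k\ge0$ ($1\le k\le m$) by $$\cosh\frac{\alpha_j}{2}=\frac{x}{\cos\frac{\pi(2j-1)}{4n}}-\cos\frac{\pi(2j-1)}{4n},\qquad \cosh\frac{\beta_k}{2}=\frac{x}{\cos\frac{\pi(2k-1)}{4m}}-\cos\frac{\pi(2k-1)}{4m}.$$ Then $$\prod_{j=1}^n\left(\cosh(m\alpha_j)+\cos\frac{m\pi(2j-1)}{2n}\right)=\prod_{k=1}^m\left(\cosh(n\beta_k)+\cos\frac{n\pi(2k-1)}{2m}\right).$$ *)

theory Defs
  imports "HOL-Analysis.Analysis"
begin

end

theory Submission
  imports Defs "HOL-Computational_Algebra.Fundamental_Theorem_Algebra"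
begin

text \<open>
  Factoring \<open>cosh (N t) - cos (N \<psi>)\<close> over the \<open>N\<close>-th roots of unity, with \<open>N = 2m\<close> and
  \<open>t = \<alpha>\<^sub>j / 2\<close>, turns the \<open>j\<close>-th factor of the left-hand side into a constant times
  \<open>\<Prod>\<^sub>k F(\<theta>\<^sub>j, \<phi>\<^sub>k)\<close>, where \<open>\<theta>\<^sub>j = (2j-1)\<pi>/(2n)\<close>, \<open>\<phi>\<^sub>k = (2k-1)\<pi>/(2m)\<close> with \<open>k\<close> running over
  \<open>1..2m\<close>, and \<open>F(\<theta>, \<phi>) = x - (1 + cos \<theta> + cos \<phi> + cos (\<theta> + \<phi>))/2\<close> is symmetric:
  the defining equation of \<open>\<alpha>\<^sub>j\<close> is exactly what makes the factors equal to
  \<open>F(\<theta>\<^sub>j, \<phi>\<^sub>k) / cos (\<theta>\<^sub>j/2)\<close>.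
  Since \<open>F(2\<pi> - \<theta>, 2\<pi> - \<phi>) = F(\<theta>, \<phi>)\<close>, the product of \<open>F\<close> over \<open>j \<le> n, k \<le> 2m\<close> equals the
  product over \<open>j \<le> 2n, k \<le> m\<close>, which by symmetry of \<open>F\<close> is what the right-hand side gives;
  the constants agree because \<open>\<Prod>\<^sub>j cos (\<theta>\<^sub>j/2)\<^sup>2 = 2\<^bsup>1-2n\<^esup>\<close>.
\<close>

lemma monom_minus_one_eq_prod_roots_unity:
  assumes "N > 0"
  shows "(\<Prod>z | z ^ N = 1. [:-z, 1:]) = (monom (1::complex) N - 1)"
proof -
  define p where "p = (monom (1::complex) N - 1)"
  have coeff_N: "coeff p N = 1" using assms unfolding p_def by (simp add: coeff_monom)
  have "degree p = N"
  proof (rule antisym)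
    show "degree p \<le> N" unfolding p_def
      by (rule degree_diff_le) (auto simp: degree_monom_le)
    show "N \<le> degree p" using coeff_N by (intro le_degree) simp
  qed
  with coeff_N have lead: "lead_coeff p = 1" by simp
  have roots: "{z. poly p z = 0} = {z. z ^ N = 1}" unfolding p_def by (auto simp: poly_monom)
  have "rsquarefree p"
    unfolding rsquarefree_roots
  proof (intro allI notI)
    fix a assume a: "poly p a = 0 \<and> poly (pderiv p) a = 0"
    then have "a ^ N = 1" unfolding p_def by (simp add: poly_monom)
    then have "a \<noteq> 0" using assms by (metis power_0_left zero_neq_one neq0_conv)
    moreover have "poly (pderiv p) a = of_nat N * a ^ (N - 1)"
      unfolding p_def by (simp add: pderiv_diff pderiv_monom poly_monom)
    ultimately show False using a assms by simp
  qed
  from complex_poly_decompose_rsquarefree[OF this] lead roots show ?thesis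
    unfolding p_def by simp
qed

lemma prod_minus_roots_unity:
  assumes "N > 0"
  shows "(\<Prod>k<N. w - cis (2 * pi * real k / real N)) = w ^ N - 1"
proof -
  have "(\<Prod>k<N. w - cis (2 * pi * real k / real N)) = (\<Prod>z | z ^ N = 1. w - z)"
    by (rule prod.reindex_bij_betw[OF Complex.bij_betw_roots_unity[OF assms]])
  also have "\<dots> = poly (\<Prod>z | z ^ N = 1. [:-z, 1:]) w"
    by (simp add: poly_prod)
  also have "\<dots> = w ^ N - 1"
    by (simp add: monom_minus_one_eq_prod_roots_unity[OF assms] poly_monom)
  finally show ?thesis .
qed

lemma prod_minus_cis_rotated:
  assumes "N > 0"
  shows "(\<Prod>k<N. z - cis (\<psi> + 2 * pi * real k / real N)) = z ^ N - cis (real N * \<psi>)"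
proof -
  define w where "w = z / cis \<psi>"
  have "(\<Prod>k<N. z - cis (\<psi> + 2 * pi * real k / real N))
      = (\<Prod>k<N. cis \<psi> * (w - cis (2 * pi * real k / real N)))"
    by (intro prod.cong refl) (simp add: w_def algebra_simps cis_mult)
  also have "\<dots> = cis \<psi> ^ N * (w ^ N - 1)"
    by (simp add: prod.distrib prod_minus_roots_unity[OF assms])
  also have "\<dots> = z ^ N - cis \<psi> ^ N"
    by (simp add: w_def power_divide algebra_simps)
  finally show ?thesis by (simp only: Complex.DeMoivre)
qed

lemma cosh_minus_cos_eq_complex:
  "complex_of_real (cosh t - cos u) =
    (of_real (exp t) - cis u) * (of_real (exp t) - cis (-u)) / (2 * of_real (exp t))"
proof -
  have "(complex_of_real (exp t) - cis u) * (exp t - cis (-u))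
      = complex_of_real (exp t ^ 2 - 2 * exp t * cos u + 1)"
    by (simp add: complex_eq_iff power2_eq_square algebra_simps cos_squared_eq)
  moreover have "cosh t - cos u = (exp t ^ 2 - 2 * exp t * cos u + 1) / (2 * exp t)"
    by (simp add: cosh_def exp_minus field_simps power2_eq_square)
  ultimately show ?thesis by simp
qed

lemma cosh_mult_minus_cos_mult_eq_prod:
  assumes "N > 0"
  shows "cosh (real N * t) - cos (real N * \<psi>)
       = 2 ^ (N - 1) * (\<Prod>k<N. cosh t - cos (\<psi> + 2 * pi * real k / real N))"
proof -
  define z where "z = complex_of_real (exp t)"
  define \<psi>\<^sub>k where "\<psi>\<^sub>k k = \<psi> + 2 * pi * real k / real N" for k
  have "z \<noteq> 0" "cnj z = z" by (simp_all add: z_def)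
  have prod_plus: "(\<Prod>k<N. z - cis (\<psi>\<^sub>k k)) = z ^ N - cis (real N * \<psi>)"
    unfolding \<psi>\<^sub>k_def by (rule prod_minus_cis_rotated[OF assms])
  have prod_minus: "(\<Prod>k<N. z - cis (- \<psi>\<^sub>k k)) = z ^ N - cis (- (real N * \<psi>))"
    using arg_cong[OF prod_plus, of cnj] \<open>cnj z = z\<close> by (simp add: cis_cnj)
  have "complex_of_real (\<Prod>k<N. cosh t - cos (\<psi>\<^sub>k k))
      = (\<Prod>k<N. (z - cis (\<psi>\<^sub>k k)) * (z - cis (- \<psi>\<^sub>k k)) / (2 * z))"
    unfolding of_real_prod z_def by (intro prod.cong refl cosh_minus_cos_eq_complex)
  also have "\<dots> = (z ^ N - cis (real N * \<psi>)) * (z ^ N - cis (- (real N * \<psi>))) / (2 ^ N * z ^ N)"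
    by (simp only: prod.distrib prod_dividef prod_plus prod_minus prod_constant card_lessThan)
  also have "\<dots> = (z ^ N - cis (real N * \<psi>)) * (z ^ N - cis (- (real N * \<psi>))) / (2 * z ^ N) / 2 ^ (N - 1)"
  proof -
    have "(2::complex) ^ N = 2 * 2 ^ (N - 1)" using assms by (cases N) simp_all
    then show ?thesis by (simp add: ac_simps)
  qed
  also have "\<dots> = complex_of_real ((cosh (real N * t) - cos (real N * \<psi>)) / 2 ^ (N - 1))"
    unfolding of_real_divide cosh_minus_cos_eq_complex z_def
    by (simp add: exp_of_nat_mult of_real_power)
  finally have "(\<Prod>k<N. cosh t - cos (\<psi>\<^sub>k k)) = (cosh (real N * t) - cos (real N * \<psi>)) / 2 ^ (N - 1)"
    by (simp only: of_real_eq_iff)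
  then show ?thesis unfolding \<psi>\<^sub>k_def by simp
qed

lemma prod_upper_half_reflect:
  fixes n :: nat
  shows "(\<Prod>j\<in>{n..<2 * n}. g j) = (\<Prod>j<n. g (2 * n - 1 - j))"
  by (rule prod.reindex_bij_witness[of _ "\<lambda>j. 2 * n - 1 - j" "\<lambda>j. 2 * n - 1 - j"]) auto

lemma prod_lessThan_double:
  fixes n :: nat
  shows "(\<Prod>j<2 * n. g j) = (\<Prod>j<n. g j) * (\<Prod>j\<in>{n..<2 * n}. g j)"
proof -
  have split: "{..<2 * n} = {..<n} \<union> {n..<2 * n}" by auto
  show ?thesis unfolding split by (rule prod.union_disjoint) auto
qed

lemma prod_lessThan_double_reflect:
  fixes g :: "nat \<Rightarrow> 'a :: comm_monoid_mult"
  assumes "\<And>j. j < n \<Longrightarrow> g (2 * n - 1 - j) = g j"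
  shows "(\<Prod>j<2 * n. g j) = (\<Prod>j<n. g j) ^ 2"
  using assms by (simp add: prod_lessThan_double prod_upper_half_reflect power2_eq_square)

text \<open>
  The involution \<open>(j, k) \<mapsto> (2n-1-j, 2m-1-k)\<close> exchanges the blocks
  \<open>j < n, m \<le> k\<close> and \<open>n \<le> j, k < m\<close> of \<open>{..<2n} \<times> {..<2m}\<close>.
\<close>
lemma prod_half_rows_eq_prod_half_cols:
  fixes F :: "nat \<Rightarrow> nat \<Rightarrow> 'a :: comm_monoid_mult"
  assumes "\<And>j k. j < 2 * n \<Longrightarrow> k < 2 * m \<Longrightarrow> F (2 * n - 1 - j) (2 * m - 1 - k) = F j k"
  shows "(\<Prod>j<n. \<Prod>k<2 * m. F j k) = (\<Prod>j<2 * n. \<Prod>k<m. F j k)"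
proof -
  have "(\<Prod>j\<in>{n..<2 * n}. \<Prod>k<m. F j k) = (\<Prod>j<n. \<Prod>k<m. F (2 * n - 1 - j) k)"
    by (rule prod_upper_half_reflect)
  also have "\<dots> = (\<Prod>j<n. \<Prod>k<m. F j (2 * m - 1 - k))"
  proof (intro prod.cong refl)
    fix j k assume "j \<in> {..<n}" "k \<in> {..<m}"
    then show "F (2 * n - 1 - j) k = F j (2 * m - 1 - k)"
      using assms[of "2 * n - 1 - j" k] by simp
  qed
  also have "\<dots> = (\<Prod>j<n. \<Prod>k\<in>{m..<2 * m}. F j k)"
    by (simp add: prod_upper_half_reflect)
  finally have upper_rows: "(\<Prod>j\<in>{n..<2 * n}. \<Prod>k<m. F j k) = (\<Prod>j<n. \<Prod>k\<in>{m..<2 * m}. F j k)" .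
  show ?thesis by (simp only: prod_lessThan_double prod.distrib upper_rows)
qed

text \<open>Indices start at \<open>0\<close>: the angle \<open>(2j-1)\<pi>/(2n)\<close> of the theorem is \<open>odd_angle n (j - 1)\<close>.\<close>
definition odd_angle :: "nat \<Rightarrow> nat \<Rightarrow> real" where
  "odd_angle n j = pi * (2 * real j + 1) / (2 * real n)"

lemma odd_angle_reflect:
  assumes "j < 2 * n"
  shows "odd_angle n (2 * n - 1 - j) = 2 * pi - odd_angle n j"
proof -
  have "real (2 * n - 1 - j) = 2 * real n - 1 - real j" using assms by (simp add: of_nat_diff)
  then show ?thesis using assms unfolding odd_angle_def by (simp add: field_simps)
qed

lemma cos_half_odd_angle_pos:
  assumes "j < n"
  shows "cos (odd_angle n j / 2) > 0"
proof (rule cos_gt_zero_pi)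
  have "pi * (2 * real j + 1) < pi * (2 * real n)"
    using assms by (intro mult_strict_left_mono) simp_all
  then show "odd_angle n j / 2 < pi / 2"
    using assms unfolding odd_angle_def by (simp add: pos_divide_less_eq)
  have "odd_angle n j > 0"
    using assms unfolding odd_angle_def by simp
  then show "- (pi / 2) < odd_angle n j / 2"
    using pi_gt_zero by linarith
qed

definition pair_factor :: "real \<Rightarrow> real \<Rightarrow> real \<Rightarrow> real" where
  "pair_factor x \<theta> \<phi> = x - (1 + cos \<theta> + cos \<phi> + cos (\<theta> + \<phi>)) / 2"

lemma pair_factor_commute: "pair_factor x \<theta> \<phi> = pair_factor x \<phi> \<theta>"
  unfolding pair_factor_def by (simp add: add_ac)

lemma pair_factor_reflect: "pair_factor x (2 * pi - \<theta>) (2 * pi - \<phi>) = pair_factor x \<theta> \<phi>"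
proof -
  have "cos (2 * pi - \<theta> + (2 * pi - \<phi>)) = cos (\<theta> + \<phi>)"
    using cos_periodic[of "- (\<theta> + \<phi>)"] by (simp add: cos_diff algebra_simps)
  then show ?thesis unfolding pair_factor_def by (simp add: cos_diff)
qed

lemma pair_factor_double_angle:
  "pair_factor x (2 * a) b = x - cos a * (cos a + cos (a + b))"
proof -
  have "1 + cos (2 * a) + cos b + cos (2 * a + b) = 2 * (cos a * (cos a + cos (a + b)))"
    unfolding cos_add[of "2 * a" b] cos_add[of a b] cos_double_cos sin_double
    by (simp add: algebra_simps power2_eq_square)
  then show ?thesis unfolding pair_factor_def by simp
qed

lemma cosh_mult_plus_cos_eq_prod_pair_factor:
  assumes "m > 0" and "cos a \<noteq> 0" and \<alpha>: "cosh (\<alpha> / 2) = x / cos a - cos a"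
  shows "cosh (real m * \<alpha>) + cos (2 * real m * a)
       = 2 ^ (2 * m - 1) * (\<Prod>k<2 * m. pair_factor x (2 * a) (odd_angle m k)) / cos a ^ (2 * m)"
proof -
  \<comment> \<open>The shift by \<open>\<pi>/(2m)\<close> turns \<open>-cos\<close> into \<open>+cos\<close> and the roots of unity into odd angles.\<close>
  define \<psi> where "\<psi> = a + pi / (2 * real m)"
  have "real (2 * m) * \<psi> = 2 * real m * a + pi"
    using assms(1) by (simp add: \<psi>_def field_simps)
  then have "cos (real (2 * m) * \<psi>) = - cos (2 * real m * a)"
    by (simp add: cos_periodic_pi)
  moreover have "cosh (\<alpha> / 2) - cos (\<psi> + 2 * pi * real k / real (2 * m))
      = pair_factor x (2 * a) (odd_angle m k) / cos a" for k
  proof -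
    have "\<psi> + 2 * pi * real k / real (2 * m) = a + odd_angle m k"
      using assms(1) unfolding \<psi>_def odd_angle_def by (simp add: field_simps)
    then show ?thesis
      using assms(2) unfolding \<alpha> pair_factor_double_angle by (simp add: field_simps)
  qed
  ultimately show ?thesis
    using cosh_mult_minus_cos_mult_eq_prod[of "2 * m" "\<alpha> / 2" \<psi>] assms(1)
    by (simp add: prod_dividef)
qed

lemma prod_cos_half_odd_angle_sq:
  assumes "n > 0"
  shows "2 ^ (2 * n - 1) * (\<Prod>j<n. cos (odd_angle n j / 2)) ^ 2 = 1"
proof -
  define C where "C = (\<Prod>j<n. cos (odd_angle n j / 2))"
  define \<psi> where "\<psi> = pi + pi / (2 * real n)"
  have "real (2 * n) * \<psi> = real (2 * n + 1) * pi"
    using assms by (simp add: \<psi>_def field_simps)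
  then have "cos (real (2 * n) * \<psi>) = cos (real (2 * n + 1) * pi)"
    by simp
  then have lhs: "cosh 0 - cos (real (2 * n) * \<psi>) = 2" by (simp only: cos_npi) simp
  have factor: "cosh 0 - cos (\<psi> + 2 * pi * real k / real (2 * n)) = 2 * cos (odd_angle n k / 2) ^ 2"
    for k
  proof -
    have "\<psi> + 2 * pi * real k / real (2 * n) = pi + 2 * (odd_angle n k / 2)"
      using assms unfolding \<psi>_def odd_angle_def by (simp add: field_simps)
    moreover have "cos (odd_angle n k) = 2 * cos (odd_angle n k / 2) ^ 2 - 1"
      using cos_double_cos[of "odd_angle n k / 2"] by simp
    ultimately show ?thesis by (simp add: cos_periodic_pi2)
  qed
  have squares: "(\<Prod>k<2 * n. cos (odd_angle n k / 2) ^ 2) = (C ^ 2) ^ 2"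
  proof -
    have "cos (odd_angle n (2 * n - 1 - j) / 2) ^ 2 = cos (odd_angle n j / 2) ^ 2" if "j < n" for j
    proof -
      have "odd_angle n (2 * n - 1 - j) / 2 = pi - odd_angle n j / 2"
        using odd_angle_reflect[of j n] that by (simp add: field_simps)
      then have "cos (odd_angle n (2 * n - 1 - j) / 2) = - cos (odd_angle n j / 2)"
        by (simp only: cos_pi_minus)
      then show ?thesis by simp
    qed
    then show ?thesis
      unfolding C_def by (simp add: prod_lessThan_double_reflect prod_power_distrib)
  qed
  have "cosh (real (2 * n) * 0) - cos (real (2 * n) * \<psi>)
      = 2 ^ (2 * n - 1) * (\<Prod>k<2 * n. cosh 0 - cos (\<psi> + 2 * pi * real k / real (2 * n)))"
    using assms by (intro cosh_mult_minus_cos_mult_eq_prod) simp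
  then have "2 = 2 ^ (2 * n - 1) * (\<Prod>k<2 * n. 2 * cos (odd_angle n k / 2) ^ 2)"
    by (simp only: mult_zero_right lhs factor)
  also have "\<dots> = 2 ^ (2 * n - 1) * (2 ^ (2 * n) * (C ^ 2) ^ 2)"
    by (simp add: prod.distrib squares)
  also have "\<dots> = 2 * (2 ^ (2 * n - 1) * C ^ 2) ^ 2"
  proof -
    have "(2::real) ^ (2 * n) = 2 * 2 ^ (2 * n - 1)" using assms by (cases n) simp_all
    then show ?thesis by (simp add: power_mult_distrib power2_eq_square)
  qed
  finally have "(2 ^ (2 * n - 1) * C ^ 2) ^ 2 = (1::real)" by simp
  moreover have "2 ^ (2 * n - 1) * C ^ 2 \<ge> (0::real)" by simp
  ultimately have "2 ^ (2 * n - 1) * C ^ 2 = (1::real)"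
    unfolding power2_eq_1_iff by linarith
  then show ?thesis unfolding C_def .
qed

lemma prod_cosh_plus_cos_eq_prod_pair_factor:
  fixes \<alpha> :: "nat \<Rightarrow> real"
  assumes "m > 0" and "n > 0"
    and \<alpha>: "\<And>j. 1 \<le> j \<Longrightarrow> j \<le> n \<Longrightarrow>
           cosh (\<alpha> j / 2) = x / cos (pi * (2 * real j - 1) / (4 * real n)) - cos (pi * (2 * real j - 1) / (4 * real n))"
  shows "(\<Prod>j=1..n. cosh (real m * \<alpha> j) + cos (real m * pi * (2 * real j - 1) / (2 * real n)))
       = 2 ^ (n * (2 * m - 1)) * 2 ^ (m * (2 * n - 1))
           * (\<Prod>j<n. \<Prod>k<2 * m. pair_factor x (odd_angle n j) (odd_angle m k))"
proof -
  define P where "P = (\<Prod>j<n. \<Prod>k<2 * m. pair_factor x (odd_angle n j) (odd_angle m k))"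
  define C where "C = (\<Prod>j<n. cos (odd_angle n j / 2))"
  have "(\<Prod>j=1..n. cosh (real m * \<alpha> j) + cos (real m * pi * (2 * real j - 1) / (2 * real n)))
      = (\<Prod>j<n. cosh (real m * \<alpha> (Suc j)) + cos (real m * pi * (2 * real (Suc j) - 1) / (2 * real n)))"
    unfolding One_nat_def by (rule prod.atLeast1_atMost_eq)
  also have "\<dots> = (\<Prod>j<n. 2 ^ (2 * m - 1) * (\<Prod>k<2 * m. pair_factor x (odd_angle n j) (odd_angle m k))
                         / cos (odd_angle n j / 2) ^ (2 * m))"
  proof (intro prod.cong refl)
    fix j assume "j \<in> {..<n}"
    have angle: "pi * (2 * real (Suc j) - 1) / (4 * real n) = odd_angle n j / 2"
      unfolding odd_angle_def by (simp add: field_simps)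
    have angle': "real m * pi * (2 * real (Suc j) - 1) / (2 * real n) = 2 * real m * (odd_angle n j / 2)"
      using \<open>n > 0\<close> unfolding odd_angle_def by (simp add: field_simps)
    have \<alpha>\<^sub>j: "cosh (\<alpha> (Suc j) / 2) = x / cos (odd_angle n j / 2) - cos (odd_angle n j / 2)"
      using \<alpha>[of "Suc j", unfolded angle] \<open>j \<in> {..<n}\<close> by simp
    show "cosh (real m * \<alpha> (Suc j)) + cos (real m * pi * (2 * real (Suc j) - 1) / (2 * real n))
        = 2 ^ (2 * m - 1) * (\<Prod>k<2 * m. pair_factor x (odd_angle n j) (odd_angle m k))
            / cos (odd_angle n j / 2) ^ (2 * m)"
      unfolding angle'
      using cosh_mult_plus_cos_eq_prod_pair_factor[OF \<open>m > 0\<close> _ \<alpha>\<^sub>j]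
        cos_half_odd_angle_pos[of j n] \<open>j \<in> {..<n}\<close> by simp
  qed
  also have "\<dots> = (2 ^ (2 * m - 1)) ^ n * P / (C ^ 2) ^ m"
  proof -
    have "(\<Prod>j<n. cos (odd_angle n j / 2) ^ (2 * m)) = (C ^ 2) ^ m"
      unfolding C_def by (simp add: prod_power_distrib flip: power_mult)
    then show ?thesis unfolding P_def by (simp add: prod.distrib prod_dividef)
  qed
  also have "(C ^ 2) ^ m = 1 / 2 ^ (m * (2 * n - 1))"
  proof -
    have "C ^ 2 = 1 / 2 ^ (2 * n - 1)"
      using prod_cos_half_odd_angle_sq[OF \<open>n > 0\<close>] unfolding C_def by (simp add: eq_divide_eq mult.commute)
    then show ?thesis by (simp add: power_one_over flip: power_mult)
  qed
  also have "((2::real) ^ (2 * m - 1)) ^ n = 2 ^ (n * (2 * m - 1))"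
    unfolding power_mult[symmetric] by (simp only: mult.commute)
  finally show ?thesis unfolding P_def by simp
qed

lemma prod_pair_factor_swap:
  "(\<Prod>j<n. \<Prod>k<2 * m. pair_factor x (odd_angle n j) (odd_angle m k))
     = (\<Prod>k<m. \<Prod>j<2 * n. pair_factor x (odd_angle m k) (odd_angle n j))"
proof -
  have "(\<Prod>j<n. \<Prod>k<2 * m. pair_factor x (odd_angle n j) (odd_angle m k))
      = (\<Prod>j<2 * n. \<Prod>k<m. pair_factor x (odd_angle n j) (odd_angle m k))"
    by (rule prod_half_rows_eq_prod_half_cols) (simp only: odd_angle_reflect pair_factor_reflect)
  then show ?thesis
    by (subst (asm) prod.swap) (simp add: pair_factor_commute)
qed

theorem mainTheorem13:
  fixes m n :: nat and x :: real and \<alpha> \<beta> :: "nat \<Rightarrow> real"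
  assumes "m > 0" and "n > 0" and "x \<ge> 2"
    and "\<And>j. 1 \<le> j \<Longrightarrow> j \<le> n \<Longrightarrow> \<alpha> j \<ge> 0 \<and>
           cosh (\<alpha> j / 2) = x / cos (pi * (2 * real j - 1) / (4 * real n)) - cos (pi * (2 * real j - 1) / (4 * real n))"
    and "\<And>k. 1 \<le> k \<Longrightarrow> k \<le> m \<Longrightarrow> \<beta> k \<ge> 0 \<and>
           cosh (\<beta> k / 2) = x / cos (pi * (2 * real k - 1) / (4 * real m)) - cos (pi * (2 * real k - 1) / (4 * real m))"
  shows "(\<Prod>j=1..n. cosh (real m * \<alpha> j) + cos (real m * pi * (2 * real j - 1) / (2 * real n)))
       = (\<Prod>k=1..m. cosh (real n * \<beta> k) + cos (real n * pi * (2 * real k - 1) / (2 * real m)))"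
proof -
  have "(\<Prod>j=1..n. cosh (real m * \<alpha> j) + cos (real m * pi * (2 * real j - 1) / (2 * real n)))
       = 2 ^ (n * (2 * m - 1)) * 2 ^ (m * (2 * n - 1))
           * (\<Prod>j<n. \<Prod>k<2 * m. pair_factor x (odd_angle n j) (odd_angle m k))"
    using assms(4) by (intro prod_cosh_plus_cos_eq_prod_pair_factor assms(1,2)) simp
  also have "\<dots> = 2 ^ (m * (2 * n - 1)) * 2 ^ (n * (2 * m - 1))
           * (\<Prod>k<m. \<Prod>j<2 * n. pair_factor x (odd_angle m k) (odd_angle n j))"
    by (simp add: prod_pair_factor_swap)
  also have "\<dots> = (\<Prod>k=1..m. cosh (real n * \<beta> k) + cos (real n * pi * (2 * real k - 1) / (2 * real m)))"
    using assms(5) by (intro prod_cosh_plus_cos_eq_prod_pair_factor[symmetric] assms(1,2)) simp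
  finally show ?thesis .
qed

end
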